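(* Let $(I_t)_{t\in\mathbb{Z}}$ be a stochastic process such that there exists a family $(I_t^n)_{t\in\mathbb{Z}}$, $n\in\mathbb{N}$, of $\{0,1\}$-valued stationary stochastic processes with $P(I_0^n=1)>0$ for all $n$ and $$\mathcal{L}\bigl((I_t^n)_{t\in\{-u,\dots,v\}}\mid I_0^n=1\bigr)\Longrightarrow \mathcal{L}\bigl((I_t)_{t\in\{-u,\dots,v\}}\bigr)\quad (n\to\infty)$$ for all $u,v\in\mathbb{N}$. Define $S_+^i=\sum_{t=1}^\infty I_t$ and $S_-^i=\sum_{t=1}^\infty I_{-t}$ (values in $\mathbb{N}_0\cup\{\infty\}$). (a) The law of $(S_-^i,S_+^i)$ is symmetric (in particular $S_-^i$ and $S_+^i$ have the same distribution; let $S^i_{\pm}$ denote a random variable with this common distribution), and for all $k,\ell\in\mathbb{N}_0$, $$P(S_+^i=k,\ S_-^i\ge \ell)=P(S^i_{\pm}=k+\ell),$$ $$P(S_+^i=k,\ S_-^i=\ell)=P(S^i_{\pm}=k+\ell)-P(S^i_{\pm}=k+\ell+1).$$ (b) The common probability mass function of $S_-^i$ and $S_+^i$ is nonincreasing on $\mathbb{N}_0$: $P(S^i_{\pm}=k)\ge P(S^i_{\pm}=k+1)$ for all $k\in\mathbb{N}_0$.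
   Context: $\mathbb{N}_0=\{0,1,2,\dots\}$. $\mathcal{L}(\cdot\mid\cdot)$ denotes conditional law and $\Longrightarrow$ convergence in distribution. *)

theory Defs
  imports "HOL-Probability.Probability"
begin

definition path_space :: "(int \<Rightarrow> nat) measure" where
  "path_space = PiM UNIV (\<lambda>_. count_space UNIV)"

definition stationary_process :: "'a measure \<Rightarrow> ('a \<Rightarrow> int \<Rightarrow> nat) \<Rightarrow> bool" where
  "stationary_process M X \<longleftrightarrow>
     (\<forall>t. (\<lambda>\<omega>. X \<omega> t) \<in> measurable M (count_space UNIV)) \<and>
     (\<forall>s. distr M path_space (\<lambda>\<omega> t. X \<omega> (t + s)) = distr M path_space X)"

definition S_plus :: "(int \<Rightarrow> nat) \<Rightarrow> enat" where
  "S_plus x = (\<Sum>t. enat (x (int t + 1)))"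

definition S_minus :: "(int \<Rightarrow> nat) \<Rightarrow> enat" where
  "S_minus x = (\<Sum>t. enat (x (- (int t + 1))))"

end

theory Submission
  imports Defs
begin

text \<open>
  In the limit the conditioned processes become a Palm process: \<open>I 0 = 1\<close>, \<open>I\<close> is
  \<open>{0,1}\<close>-valued, and moving the origin to any other point of \<open>I\<close> preserves the law of every
  window (point-stationarity), because the approximating processes are stationary.
  Moving the origin to the \<open>(l+1)\<close>-th point to the left of \<open>0\<close>, and summing over its possible
  positions, shows that \<open>{S_+ \<le> k, S_- \<ge> l+1}\<close> and \<open>{l+1 \<le> S_+ \<le> k+l+1}\<close> are equally likely;
  differencing in \<open>k\<close> gives \<open>P(S_+ = k, S_- \<ge> l) = P(S_+ = k+l)\<close>, and differencing in \<open>l\<close> shows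
  that the joint mass function at finite arguments depends only on \<open>k + l\<close>. Masses with exactly
  one infinite coordinate vanish, being bounded by \<open>P(S_+ = k+L) \<rightarrow> 0\<close> (and by the same bound
  for the reflected process), so the joint law is symmetric; the mass function of \<open>S_+\<close> is
  nonincreasing since \<open>P(S_+ = k) - P(S_+ = k+1) = P(S_+ = k, S_- = 0)\<close>.
\<close>

section \<open>Partial sums of \<open>0/1\<close> sequences\<close>

lemma suminf_enat_le_iff: "(\<Sum>i. enat (g i)) \<le> enat m \<longleftrightarrow> (\<forall>n. (\<Sum>i<n. g i) \<le> m)"
  by (simp add: suminf_eq_SUP SUP_le_iff flip: of_nat_eq_enat of_nat_sum)

lemma enat_le_suminf_iff: "enat m \<le> (\<Sum>i. enat (g i)) \<longleftrightarrow> (\<exists>n. m \<le> (\<Sum>i<n. g i))"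
proof (cases m)
  case 0
  then show ?thesis by (simp flip: zero_enat_def)
next
  case (Suc m')
  then have "enat m \<le> (\<Sum>i. enat (g i)) \<longleftrightarrow> \<not> (\<Sum>i. enat (g i)) \<le> enat m'"
    by (metis Suc_ile_eq not_le)
  then show ?thesis
    using Suc by (auto simp: suminf_enat_le_iff not_le Suc_le_eq)
qed

lemma sum_lessThan_add: "(\<Sum>i<m + n. g i) = (\<Sum>i<m. g i) + (\<Sum>i<n. g (m + i))"
  for g :: "nat \<Rightarrow> 'a::comm_monoid_add"
  by (induction n) (simp_all add: add.assoc)

lemma sum_lessThan_int_diff_reindex:
  "(\<Sum>i<j. h (int j - int i)) = (\<Sum>i<j. h (int i + 1))"
proof -
  have "(\<Sum>i<j. h (int j - int i)) = (\<Sum>i<j. (\<lambda>i. h (int i + 1)) (j - Suc i))"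
    by (intro sum.cong) (auto simp: of_nat_diff)
  also have "\<dots> = (\<Sum>i<j. h (int i + 1))"
    by (rule sum.nat_diff_reindex)
  finally show ?thesis .
qed

lemma ex_one_at_partial_sum:
  fixes g :: "nat \<Rightarrow> nat"
  assumes "\<And>i. g i \<le> 1" and "Suc l \<le> (\<Sum>i<n. g i)"
  shows "\<exists>j. g j = 1 \<and> (\<Sum>i<j. g i) = l"
  using assms(2)
proof (induction n)
  case (Suc n)
  show ?case
  proof (cases "Suc l \<le> (\<Sum>i<n. g i)")
    case False
    with Suc.prems assms(1)[of n] have "g n = 1 \<and> (\<Sum>i<n. g i) = l"
      by simp
    then show ?thesis by blast
  qed (rule Suc.IH)
qed simp

lemma partial_sum_strict_mono_at_one:
  fixes g :: "nat \<Rightarrow> nat"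
  assumes "g j = 1" and "j < j'"
  shows "(\<Sum>i<j. g i) < (\<Sum>i<j'. g i)"
proof -
  have "(\<Sum>i<Suc j. g i) \<le> (\<Sum>i<j'. g i)"
    using assms(2) by (intro sum_mono2) auto
  with assms(1) show ?thesis by simp
qed

lemma one_at_partial_sum_unique:
  fixes g :: "nat \<Rightarrow> nat"
  assumes "g j = 1" "g j' = 1" and "(\<Sum>i<j. g i) = (\<Sum>i<j'. g i)"
  shows "j = j'"
  using partial_sum_strict_mono_at_one[of g j j'] partial_sum_strict_mono_at_one[of g j' j] assms
  by (metis less_irrefl linorder_neqE_nat)

lemma enat_Suc_le_suminf_iff:
  fixes g :: "nat \<Rightarrow> nat"
  assumes "\<And>i. g i \<le> 1"
  shows "enat (Suc l) \<le> (\<Sum>i. enat (g i)) \<longleftrightarrow> (\<exists>j. g j = 1 \<and> (\<Sum>i<j. g i) = l)"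
proof
  assume "enat (Suc l) \<le> (\<Sum>i. enat (g i))"
  then obtain n where "Suc l \<le> (\<Sum>i<n. g i)"
    by (auto simp: enat_le_suminf_iff)
  with assms show "\<exists>j. g j = 1 \<and> (\<Sum>i<j. g i) = l"
    by (rule ex_one_at_partial_sum)
next
  assume "\<exists>j. g j = 1 \<and> (\<Sum>i<j. g i) = l"
  then obtain j where "g j = 1" "(\<Sum>i<j. g i) = l" by blast
  then have "Suc l \<le> (\<Sum>i<Suc j. g i)" by simp
  then show "enat (Suc l) \<le> (\<Sum>i. enat (g i))"
    unfolding enat_le_suminf_iff by blast
qed

lemma suminf_enat_le_iff_tail:
  fixes g :: "nat \<Rightarrow> nat"
  assumes "g j = 1" and "(\<Sum>i<j. g i) = l"
  shows "(\<Sum>i. enat (g i)) \<le> enat (k + Suc l) \<longleftrightarrow> (\<forall>v. (\<Sum>i<v. g (Suc j + i)) \<le> k)"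
proof -
  have head: "(\<Sum>i<Suc j. g i) = Suc l"
    using assms by simp
  have "(\<Sum>i<n. g i) \<le> k + Suc l" if tail: "\<forall>v. (\<Sum>i<v. g (Suc j + i)) \<le> k" for n
  proof (cases "n \<le> Suc j")
    case True
    then have "(\<Sum>i<n. g i) \<le> (\<Sum>i<Suc j. g i)" by (intro sum_mono2) auto
    with head show ?thesis by simp
  next
    case False
    then obtain v where "n = Suc j + v" by (metis le_add_diff_inverse nat_le_linear)
    then have "(\<Sum>i<n. g i) = (\<Sum>i<Suc j. g i) + (\<Sum>i<v. g (Suc j + i))"
      by (simp only: sum_lessThan_add)
    with head tail[rule_format, of v] show ?thesis by linarith
  qed
  moreover have "(\<Sum>i<v. g (Suc j + i)) \<le> k" if "\<forall>n. (\<Sum>i<n. g i) \<le> k + Suc l" for v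
    using that[rule_format, of "Suc j + v"] head unfolding sum_lessThan_add by linarith
  ultimately show ?thesis
    by (auto simp: suminf_enat_le_iff)
qed

lemma enat_Suc_le_suminf_le_iff:
  fixes g :: "nat \<Rightarrow> nat"
  assumes "\<And>i. g i \<le> 1"
  shows "enat (Suc l) \<le> (\<Sum>i. enat (g i)) \<and> (\<Sum>i. enat (g i)) \<le> enat (k + Suc l) \<longleftrightarrow>
    (\<exists>j. g j = 1 \<and> (\<Sum>i<j. g i) = l \<and> (\<forall>v. (\<Sum>i<v. g (Suc j + i)) \<le> k))"
proof
  assume bounds: "enat (Suc l) \<le> (\<Sum>i. enat (g i)) \<and> (\<Sum>i. enat (g i)) \<le> enat (k + Suc l)"
  then obtain j where j: "g j = 1" "(\<Sum>i<j. g i) = l"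
    using enat_Suc_le_suminf_iff[of g, OF assms] by blast
  with bounds show "\<exists>j. g j = 1 \<and> (\<Sum>i<j. g i) = l \<and> (\<forall>v. (\<Sum>i<v. g (Suc j + i)) \<le> k)"
    using suminf_enat_le_iff_tail[OF j] by blast
next
  assume "\<exists>j. g j = 1 \<and> (\<Sum>i<j. g i) = l \<and> (\<forall>v. (\<Sum>i<v. g (Suc j + i)) \<le> k)"
  then obtain j where j: "g j = 1" "(\<Sum>i<j. g i) = l" "\<forall>v. (\<Sum>i<v. g (Suc j + i)) \<le> k"
    by blast
  then show "enat (Suc l) \<le> (\<Sum>i. enat (g i)) \<and> (\<Sum>i. enat (g i)) \<le> enat (k + Suc l)"
    using enat_Suc_le_suminf_iff[of g, OF assms] suminf_enat_le_iff_tail[OF j(1,2)] by blast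
qed

section \<open>Countably-valued random variables and window events\<close>

lemma measurable_suminf_enat:
  fixes g :: "nat \<Rightarrow> 'a \<Rightarrow> nat"
  assumes [measurable]: "\<And>i. g i \<in> measurable M (count_space UNIV)"
  shows "(\<lambda>\<omega>. \<Sum>i. enat (g i \<omega>)) \<in> measurable M (count_space UNIV)"
  unfolding measurable_count_space_eq2_countable
proof (intro conjI ballI)
  fix e :: enat
  show "(\<lambda>\<omega>. \<Sum>i. enat (g i \<omega>)) -` {e} \<inter> space M \<in> sets M"
  proof (cases e)
    case (enat m)
    then have "(\<lambda>\<omega>. \<Sum>i. enat (g i \<omega>)) -` {e} \<inter> space M =
      {\<omega>\<in>space M. (\<forall>n. (\<Sum>i<n. g i \<omega>) \<le> m) \<and> (\<exists>n. m \<le> (\<Sum>i<n. g i \<omega>))}"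
      by (auto simp flip: suminf_enat_le_iff enat_le_suminf_iff)
    also have "\<dots> \<in> sets M" by measurable
    finally show ?thesis .
  next
    case infinity
    have "(\<Sum>i. enat (g i \<omega>)) = \<infinity> \<longleftrightarrow> (\<forall>m. \<not> (\<forall>n. (\<Sum>i<n. g i \<omega>) \<le> m))" for \<omega>
      unfolding suminf_enat_le_iff[symmetric] by (cases "\<Sum>i. enat (g i \<omega>)") auto
    with infinity have "(\<lambda>\<omega>. \<Sum>i. enat (g i \<omega>)) -` {e} \<inter> space M =
      {\<omega>\<in>space M. \<forall>m. \<not> (\<forall>n. (\<Sum>i<n. g i \<omega>) \<le> m)}"
      by blast
    also have "\<dots> \<in> sets M" by measurable
    finally show ?thesis .
  qed
qed auto

lemma measurable_S_plus:
  assumes "\<And>t. (\<lambda>\<omega>. X \<omega> t) \<in> measurable M (count_space UNIV)"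
  shows "(\<lambda>\<omega>. S_plus (X \<omega>)) \<in> measurable M (count_space UNIV)"
  unfolding S_plus_def by (rule measurable_suminf_enat) (rule assms)

lemma measurable_S_minus:
  assumes "\<And>t. (\<lambda>\<omega>. X \<omega> t) \<in> measurable M (count_space UNIV)"
  shows "(\<lambda>\<omega>. S_minus (X \<omega>)) \<in> measurable M (count_space UNIV)"
  unfolding S_minus_def by (rule measurable_suminf_enat) (rule assms)

lemma S_plus_reflect: "S_plus (\<lambda>t. x (- t)) = S_minus x"
  by (simp add: S_minus_def S_plus_def)

lemma S_minus_reflect: "S_minus (\<lambda>t. x (- t)) = S_plus x"
  by (simp add: S_minus_def S_plus_def add.commute)

lemma (in finite_measure) measure_INT_eq_if_decseq:
  fixes A B :: "nat \<Rightarrow> 'a set"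
  assumes "decseq A" "decseq B" "range A \<subseteq> sets M" "range B \<subseteq> sets M"
    and "\<And>v. measure M (A v) = measure M (B v)"
  shows "measure M (\<Inter>v. A v) = measure M (\<Inter>v. B v)"
proof -
  have "(\<lambda>v. measure M (A v)) \<longlonglongrightarrow> measure M (\<Inter>v. A v)"
    using assms(1,3) by (intro finite_Lim_measure_decseq) auto
  moreover have "(\<lambda>v. measure M (A v)) \<longlonglongrightarrow> measure M (\<Inter>v. B v)"
    unfolding assms(5) using assms(2,4) by (intro finite_Lim_measure_decseq) auto
  ultimately show ?thesis by (rule LIMSEQ_unique)
qed

lemma (in finite_measure) measure_UN_eq_if_disjoint:
  fixes A B :: "nat \<Rightarrow> 'a set"
  assumes "disjoint_family A" "disjoint_family B" "range A \<subseteq> sets M" "range B \<subseteq> sets M"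
    and "\<And>j. measure M (A j) = measure M (B j)"
  shows "measure M (\<Union>j. A j) = measure M (\<Union>j. B j)"
proof -
  have "(\<lambda>j. measure M (A j)) sums measure M (\<Union>j. A j)"
    using assms(1,3) by (intro finite_measure_UNION) auto
  moreover have "(\<lambda>j. measure M (A j)) sums measure M (\<Union>j. B j)"
    unfolding assms(5) using assms(2,4) by (intro finite_measure_UNION) auto
  ultimately show ?thesis by (rule sums_unique2)
qed

lemma (in finite_measure) tendsto_measure_eq_enat_zero:
  assumes [measurable]: "X \<in> measurable M (count_space UNIV)"
  shows "(\<lambda>m. measure M {\<omega>\<in>space M. X \<omega> = enat m}) \<longlonglongrightarrow> 0"
proof -
  have "(\<lambda>m. measure M {\<omega>\<in>space M. X \<omega> = enat m}) sums measure M (\<Union>m. {\<omega>\<in>space M. X \<omega> = enat m})"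
    by (intro finite_measure_UNION) (auto simp: disjoint_family_on_def)
  then show ?thesis
    by (intro summable_LIMSEQ_zero sums_summable)
qed

lemma (in finite_measure) measure_enat_eq_Suc_diff:
  assumes [measurable]: "X \<in> measurable M (count_space UNIV)" "Measurable.pred M P"
  shows "measure M {\<omega>\<in>space M. X \<omega> = enat (Suc k) \<and> P \<omega>} =
    measure M {\<omega>\<in>space M. X \<omega> \<le> enat (Suc k) \<and> P \<omega>} - measure M {\<omega>\<in>space M. X \<omega> \<le> enat k \<and> P \<omega>}"
proof -
  have "e = enat (Suc k) \<longleftrightarrow> e \<le> enat (Suc k) \<and> \<not> e \<le> enat k" for e
    by (cases e) auto
  then have "{\<omega>\<in>space M. X \<omega> = enat (Suc k) \<and> P \<omega>} =
      {\<omega>\<in>space M. X \<omega> \<le> enat (Suc k) \<and> P \<omega>} - {\<omega>\<in>space M. X \<omega> \<le> enat k \<and> P \<omega>}"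
    by blast
  moreover have "{\<omega>\<in>space M. X \<omega> \<le> enat k \<and> P \<omega>} \<subseteq> {\<omega>\<in>space M. X \<omega> \<le> enat (Suc k) \<and> P \<omega>}"
    using order_trans[of _ "enat k" "enat (Suc k)"] by auto
  ultimately show ?thesis
    by (simp add: finite_measure_Diff)
qed

lemma (in finite_measure) measure_enat_eq_diff_Suc:
  assumes [measurable]: "X \<in> measurable M (count_space UNIV)" "Measurable.pred M P"
  shows "measure M {\<omega>\<in>space M. P \<omega> \<and> X \<omega> = enat l} =
    measure M {\<omega>\<in>space M. P \<omega> \<and> enat l \<le> X \<omega>} - measure M {\<omega>\<in>space M. P \<omega> \<and> enat (Suc l) \<le> X \<omega>}"
proof -
  have "e = enat l \<longleftrightarrow> enat l \<le> e \<and> \<not> enat (Suc l) \<le> e" for e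
    by (cases e) auto
  then have "{\<omega>\<in>space M. P \<omega> \<and> X \<omega> = enat l} =
      {\<omega>\<in>space M. P \<omega> \<and> enat l \<le> X \<omega>} - {\<omega>\<in>space M. P \<omega> \<and> enat (Suc l) \<le> X \<omega>}"
    by blast
  moreover have "{\<omega>\<in>space M. P \<omega> \<and> enat (Suc l) \<le> X \<omega>} \<subseteq> {\<omega>\<in>space M. P \<omega> \<and> enat l \<le> X \<omega>}"
    using order_trans[of "enat l" "enat (Suc l)"] by auto
  ultimately show ?thesis
    by (simp add: finite_measure_Diff)
qed

lemma (in finite_measure) distr_count_space_eqI:
  fixes X Y :: "'a \<Rightarrow> 'b::countable"
  assumes [measurable]: "X \<in> measurable M (count_space UNIV)" "Y \<in> measurable M (count_space UNIV)"
    and "\<And>b. measure M {\<omega>\<in>space M. X \<omega> = b} = measure M {\<omega>\<in>space M. Y \<omega> = b}"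
  shows "distr M (count_space UNIV) X = distr M (count_space UNIV) Y"
proof (rule measure_eqI_countable[where A=UNIV])
  fix b
  have "X -` {b} \<inter> space M = {\<omega>\<in>space M. X \<omega> = b}" "Y -` {b} \<inter> space M = {\<omega>\<in>space M. Y \<omega> = b}"
    by auto
  then show "emeasure (distr M (count_space UNIV) X) {b} = emeasure (distr M (count_space UNIV) Y) {b}"
    using assms(3)[of b] by (simp add: emeasure_distr emeasure_eq_measure)
qed auto

lemma window_event_eq_UN:
  assumes dep: "\<And>f g. \<forall>t\<in>W. f t = g t \<Longrightarrow> \<Phi> f = \<Phi> g"
  shows "{\<omega>\<in>space M. \<Phi> (X \<omega>)} = (\<Union>x\<in>{x \<in> extensional W. \<Phi> x}. {\<omega>\<in>space M. \<forall>t\<in>W. X \<omega> t = x t})"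
proof (intro equalityI subsetI)
  fix \<omega> assume \<omega>: "\<omega> \<in> {\<omega>\<in>space M. \<Phi> (X \<omega>)}"
  have "\<Phi> (restrict (X \<omega>) W) = \<Phi> (X \<omega>)" by (rule dep) simp
  with \<omega> show "\<omega> \<in> (\<Union>x\<in>{x \<in> extensional W. \<Phi> x}. {\<omega>\<in>space M. \<forall>t\<in>W. X \<omega> t = x t})"
    by (intro UN_I[of "restrict (X \<omega>) W"]) auto
next
  fix \<omega> assume "\<omega> \<in> (\<Union>x\<in>{x \<in> extensional W. \<Phi> x}. {\<omega>\<in>space M. \<forall>t\<in>W. X \<omega> t = x t})"
  then obtain x where "\<Phi> x" "\<omega> \<in> space M" "\<forall>t\<in>W. X \<omega> t = x t" by blast
  with dep[of "X \<omega>" x] show "\<omega> \<in> {\<omega>\<in>space M. \<Phi> (X \<omega>)}" by auto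
qed

lemma sets_window_event:
  fixes X :: "'a \<Rightarrow> 'i \<Rightarrow> 'v::countable"
  assumes "finite W" and [measurable]: "\<And>t. (\<lambda>\<omega>. X \<omega> t) \<in> measurable M (count_space UNIV)"
    and dep: "\<And>f g. \<forall>t\<in>W. f t = g t \<Longrightarrow> \<Phi> f = \<Phi> g"
  shows "{\<omega>\<in>space M. \<Phi> (X \<omega>)} \<in> sets M"
proof -
  have "countable (PiE W (\<lambda>_. UNIV :: 'v set))"
    using \<open>finite W\<close> by (intro countable_PiE) auto
  then have "countable {x \<in> extensional W. \<Phi> x}"
    by (rule countable_subset[rotated]) (auto simp: PiE_def)
  moreover have "{\<omega>\<in>space M. \<forall>t\<in>W. X \<omega> t = x t} \<in> sets M" for x
    using \<open>finite W\<close> by measurable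
  ultimately have "(\<Union>x\<in>{x \<in> extensional W. \<Phi> x}. {\<omega>\<in>space M. \<forall>t\<in>W. X \<omega> t = x t}) \<in> sets M"
    by (intro sets.countable_UN'')
  moreover have "{\<omega>\<in>space M. \<Phi> (X \<omega>)} =
      (\<Union>x\<in>{x \<in> extensional W. \<Phi> x}. {\<omega>\<in>space M. \<forall>t\<in>W. X \<omega> t = x t})"
    using dep by (rule window_event_eq_UN)
  ultimately show ?thesis by simp
qed

lemma (in finite_measure) measure_window_event:
  fixes X :: "'a \<Rightarrow> 'i \<Rightarrow> nat"
  assumes "finite W" and [measurable]: "\<And>t. (\<lambda>\<omega>. X \<omega> t) \<in> measurable M (count_space UNIV)"
    and dep: "\<And>f g. \<forall>t\<in>W. f t = g t \<Longrightarrow> \<Phi> f = \<Phi> g"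
    and bounded: "\<And>f t. \<Phi> f \<Longrightarrow> t \<in> W \<Longrightarrow> f t \<le> 1"
  shows "measure M {\<omega>\<in>space M. \<Phi> (X \<omega>)} =
    (\<Sum>x\<in>{x \<in> extensional W. \<Phi> x}. measure M {\<omega>\<in>space M. \<forall>t\<in>W. X \<omega> t = x t})"
proof -
  have "finite (PiE W (\<lambda>_. {..1::nat}))"
    using \<open>finite W\<close> by (intro finite_PiE) auto
  then have fin: "finite {x \<in> extensional W. \<Phi> x}"
    by (rule finite_subset[rotated]) (auto simp: PiE_def dest: bounded)
  have disj: "disjoint_family_on (\<lambda>x. {\<omega>\<in>space M. \<forall>t\<in>W. X \<omega> t = x t}) {x \<in> extensional W. \<Phi> x}"
    by (auto simp: disjoint_family_on_def intro: extensionalityI)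
  have "{\<omega>\<in>space M. \<Phi> (X \<omega>)} =
      (\<Union>x\<in>{x \<in> extensional W. \<Phi> x}. {\<omega>\<in>space M. \<forall>t\<in>W. X \<omega> t = x t})"
    using dep by (rule window_event_eq_UN)
  also have "measure M \<dots> =
      (\<Sum>x\<in>{x \<in> extensional W. \<Phi> x}. measure M {\<omega>\<in>space M. \<forall>t\<in>W. X \<omega> t = x t})"
    using fin disj \<open>finite W\<close> by (intro finite_measure_finite_Union) auto
  finally show ?thesis .
qed

section \<open>Point-stationary processes\<close>

text \<open>Point-stationarity (Thorisson), restricted to finite windows: re-centring \<open>I\<close> at its
  point \<open>-s\<close> does not change the probability of any window pattern.\<close>

definition point_stationary :: "'a measure \<Rightarrow> ('a \<Rightarrow> int \<Rightarrow> nat) \<Rightarrow> bool" where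
  "point_stationary M I \<longleftrightarrow> (\<forall>a b s x. a \<le> 0 \<longrightarrow> 0 \<le> b \<longrightarrow> s \<in> {a..b} \<longrightarrow> x 0 = 1 \<longrightarrow> x s = 1 \<longrightarrow>
     measure M {\<omega>\<in>space M. \<forall>t\<in>{a..b}. I \<omega> t = x t} =
     measure M {\<omega>\<in>space M. \<forall>t\<in>{a..b}. I \<omega> (t - s) = x t})"

lemma point_stationary_reflect:
  assumes "point_stationary M I"
  shows "point_stationary M (\<lambda>\<omega> t. I \<omega> (- t))"
  unfolding point_stationary_def
proof (intro allI impI)
  fix a b s :: int and x :: "int \<Rightarrow> nat"
  assume "a \<le> 0" "0 \<le> b" "s \<in> {a..b}" "x 0 = 1" "x s = 1"
  then have "measure M {\<omega>\<in>space M. \<forall>t\<in>{-b..-a}. I \<omega> t = x (- t)} =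
      measure M {\<omega>\<in>space M. \<forall>t\<in>{-b..-a}. I \<omega> (t - - s) = x (- t)}"
    using assms[unfolded point_stationary_def, rule_format, of "-b" "-a" "-s" "\<lambda>t. x (- t)"] by simp
  then show "measure M {\<omega>\<in>space M. \<forall>t\<in>{a..b}. I \<omega> (- t) = x t} =
      measure M {\<omega>\<in>space M. \<forall>t\<in>{a..b}. I \<omega> (- (t - s)) = x t}"
    by (simp flip: image_uminus_atLeastAtMost add: algebra_simps)
qed

locale Palm_process = prob_space M for M :: "'a measure" +
  fixes I :: "'a \<Rightarrow> int \<Rightarrow> nat"
  assumes measurable_I [measurable]: "\<And>t. (\<lambda>\<omega>. I \<omega> t) \<in> measurable M (count_space UNIV)"
    and point_stationary: "point_stationary M I"
    and AE_Palm: "AE \<omega> in M. I \<omega> 0 = 1 \<and> (\<forall>t. I \<omega> t \<le> 1)"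
begin

lemmas measurable_S_plus_I [measurable] = measurable_S_plus[OF measurable_I]
lemmas measurable_S_minus_I [measurable] = measurable_S_minus[OF measurable_I]

lemma Palm_process_reflect: "Palm_process M (\<lambda>\<omega> t. I \<omega> (- t))"
proof
  show "point_stationary M (\<lambda>\<omega> t. I \<omega> (- t))"
    using point_stationary by (rule point_stationary_reflect)
  show "AE \<omega> in M. I \<omega> (- 0) = 1 \<and> (\<forall>t. I \<omega> (- t) \<le> 1)"
    using AE_Palm by auto
qed simp

lemma measure_point_stationary_event:
  assumes "a \<le> 0" "0 \<le> b" "s \<in> {a..b}"
    and dep: "\<And>f g. \<forall>t\<in>{a..b}. f t = g t \<Longrightarrow> \<Psi> f = \<Psi> g"
    and \<Psi>: "\<And>f. \<Psi> f \<Longrightarrow> f 0 = 1 \<and> f s = 1 \<and> (\<forall>t\<in>{a..b}. f t \<le> 1)"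
  shows "measure M {\<omega>\<in>space M. \<Psi> (I \<omega>)} = measure M {\<omega>\<in>space M. \<Psi> (\<lambda>t. I \<omega> (t - s))}"
proof -
  have [measurable]: "(\<lambda>\<omega>. I \<omega> (t - s)) \<in> measurable M (count_space UNIV)" for t
    by simp
  have "measure M {\<omega>\<in>space M. \<Psi> (I \<omega>)} =
      (\<Sum>x\<in>{x \<in> extensional {a..b}. \<Psi> x}. measure M {\<omega>\<in>space M. \<forall>t\<in>{a..b}. I \<omega> t = x t})"
    by (rule measure_window_event[OF _ _ dep]) (auto dest: \<Psi>)
  also have "\<dots> = (\<Sum>x\<in>{x \<in> extensional {a..b}. \<Psi> x}.
      measure M {\<omega>\<in>space M. \<forall>t\<in>{a..b}. I \<omega> (t - s) = x t})"
  proof (rule sum.cong)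
    fix x assume "x \<in> {x \<in> extensional {a..b}. \<Psi> x}"
    then have "x 0 = 1" "x s = 1" using \<Psi> by auto
    then show "measure M {\<omega>\<in>space M. \<forall>t\<in>{a..b}. I \<omega> t = x t} =
        measure M {\<omega>\<in>space M. \<forall>t\<in>{a..b}. I \<omega> (t - s) = x t}"
      using point_stationary assms(1-3) unfolding point_stationary_def by blast
  qed simp
  also have "\<dots> = measure M {\<omega>\<in>space M. \<Psi> (\<lambda>t. I \<omega> (t - s))}"
    by (rule measure_window_event[OF _ _ dep, symmetric]) (auto dest: \<Psi>)
  finally show ?thesis .
qed

lemma measure_shift_to_point:
  assumes "a \<le> 0" "0 \<le> b" "s \<in> {a..b}"
    and dep: "\<And>f g. \<forall>t\<in>{a..b}. f t = g t \<Longrightarrow> \<Phi> f = \<Phi> g"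
  shows "measure M {\<omega>\<in>space M. I \<omega> s = 1 \<and> \<Phi> (I \<omega>)} =
    measure M {\<omega>\<in>space M. I \<omega> (- s) = 1 \<and> \<Phi> (\<lambda>t. I \<omega> (t - s))}"
proof -
  define \<Psi> where "\<Psi> f \<longleftrightarrow> f 0 = 1 \<and> f s = 1 \<and> (\<forall>t\<in>{a..b}. f t \<le> 1) \<and> \<Phi> f" for f
  have "0 \<in> {a..b}"
    using assms(1,2) by simp
  have dep_point: "(f r = 1 \<and> \<Phi> f) = (g r = 1 \<and> \<Phi> g)"
    if "r \<in> {a..b}" and fg: "\<forall>t\<in>{a..b}. f t = g t" for r f g
    using that dep[OF fg] by auto
  have dep_\<Psi>: "\<Psi> f = \<Psi> g" if fg: "\<forall>t\<in>{a..b}. f t = g t" for f g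
    using fg dep_point[OF \<open>0 \<in> {a..b}\<close> fg] dep_point[OF assms(3) fg] by (auto simp: \<Psi>_def)
  have [measurable]: "(\<lambda>\<omega>. I \<omega> (t - s)) \<in> measurable M (count_space UNIV)" for t
    by simp
  have "measure M {\<omega>\<in>space M. I \<omega> s = 1 \<and> \<Phi> (I \<omega>)} = measure M {\<omega>\<in>space M. \<Psi> (I \<omega>)}"
  proof (rule measure_eq_AE)
    show "AE \<omega> in M. \<omega> \<in> {\<omega>\<in>space M. I \<omega> s = 1 \<and> \<Phi> (I \<omega>)} \<longleftrightarrow> \<omega> \<in> {\<omega>\<in>space M. \<Psi> (I \<omega>)}"
      using AE_Palm by eventually_elim (auto simp: \<Psi>_def)
    show "{\<omega>\<in>space M. I \<omega> s = 1 \<and> \<Phi> (I \<omega>)} \<in> sets M"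
      by (rule sets_window_event[OF finite_atLeastAtMost measurable_I dep_point[OF assms(3)]])
    show "{\<omega>\<in>space M. \<Psi> (I \<omega>)} \<in> sets M"
      by (rule sets_window_event[OF finite_atLeastAtMost measurable_I dep_\<Psi>])
  qed
  also have "\<dots> = measure M {\<omega>\<in>space M. \<Psi> (\<lambda>t. I \<omega> (t - s))}"
    by (rule measure_point_stationary_event[OF assms(1-3) dep_\<Psi>]) (auto simp: \<Psi>_def)
  also have "\<dots> = measure M {\<omega>\<in>space M. I \<omega> (- s) = 1 \<and> \<Phi> (\<lambda>t. I \<omega> (t - s))}"
  proof (rule measure_eq_AE)
    show "AE \<omega> in M. \<omega> \<in> {\<omega>\<in>space M. \<Psi> (\<lambda>t. I \<omega> (t - s))} \<longleftrightarrow>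
        \<omega> \<in> {\<omega>\<in>space M. I \<omega> (- s) = 1 \<and> \<Phi> (\<lambda>t. I \<omega> (t - s))}"
      using AE_Palm by eventually_elim (auto simp: \<Psi>_def)
    show "{\<omega>\<in>space M. \<Psi> (\<lambda>t. I \<omega> (t - s))} \<in> sets M"
      by (rule sets_window_event[OF finite_atLeastAtMost _ dep_\<Psi>]) simp
    have "{\<omega>\<in>space M. (\<lambda>f. f 0 = 1 \<and> \<Phi> f) (\<lambda>t. I \<omega> (t - s))} \<in> sets M"
      by (rule sets_window_event[OF finite_atLeastAtMost _ dep_point[OF \<open>0 \<in> {a..b}\<close>]]) simp
    then show "{\<omega>\<in>space M. I \<omega> (- s) = 1 \<and> \<Phi> (\<lambda>t. I \<omega> (t - s))} \<in> sets M"
      by simp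
  qed
  finally show ?thesis .
qed

text \<open>Re-centre at the \<open>(l+1)\<close>-th point to the left of the origin: the old origin becomes the
  \<open>(l+1)\<close>-th point to its right.\<close>

lemma measure_left_point_eq_right_point:
  "measure M {\<omega>\<in>space M. I \<omega> (- (int j + 1)) = 1 \<and> (\<Sum>i<j. I \<omega> (- (int i + 1))) = l \<and>
      (\<Sum>i<v. I \<omega> (int i + 1)) \<le> k} =
   measure M {\<omega>\<in>space M. I \<omega> (int j + 1) = 1 \<and> (\<Sum>i<j. I \<omega> (int i + 1)) = l \<and>
      (\<Sum>i<v. I \<omega> (int (Suc j + i) + 1)) \<le> k}"
proof -
  let ?\<Phi> = "\<lambda>f. (\<Sum>i<j. f (- (int i + 1))) = l \<and> (\<Sum>i<v. f (int i + 1)) \<le> k"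
  have "measure M {\<omega>\<in>space M. I \<omega> (- (int j + 1)) = 1 \<and> ?\<Phi> (I \<omega>)} =
      measure M {\<omega>\<in>space M. I \<omega> (- (- (int j + 1))) = 1 \<and> ?\<Phi> (\<lambda>t. I \<omega> (t - - (int j + 1)))}"
  proof (rule measure_shift_to_point[where a="- (int j + 1)" and b="int v"])
    fix f g :: "int \<Rightarrow> nat" assume fg: "\<forall>t\<in>{- (int j + 1)..int v}. f t = g t"
    have "(\<Sum>i<j. f (- (int i + 1))) = (\<Sum>i<j. g (- (int i + 1)))"
      "(\<Sum>i<v. f (int i + 1)) = (\<Sum>i<v. g (int i + 1))"
      using fg by (auto intro: sum.cong)
    then show "?\<Phi> f = ?\<Phi> g" by simp
  qed simp_all
  moreover have "(\<Sum>i<j. I \<omega> (- (int i + 1) - - (int j + 1))) = (\<Sum>i<j. I \<omega> (int i + 1))" for \<omega>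
    using sum_lessThan_int_diff_reindex[of "I \<omega>" j] by (simp add: algebra_simps)
  moreover have "(\<Sum>i<v. I \<omega> (int i + 1 - - (int j + 1))) = (\<Sum>i<v. I \<omega> (int (Suc j + i) + 1))" for \<omega>
    by (simp add: algebra_simps)
  ultimately show ?thesis by (simp only: minus_minus)
qed

lemma measure_UN_left_point_eq_UN_right_point:
  "measure M (\<Union>j. \<Inter>v. {\<omega>\<in>space M. I \<omega> (- (int j + 1)) = 1 \<and>
      (\<Sum>i<j. I \<omega> (- (int i + 1))) = l \<and> (\<Sum>i<v. I \<omega> (int i + 1)) \<le> k}) =
   measure M (\<Union>j. \<Inter>v. {\<omega>\<in>space M. I \<omega> (int j + 1) = 1 \<and>
      (\<Sum>i<j. I \<omega> (int i + 1)) = l \<and> (\<Sum>i<v. I \<omega> (int (Suc j + i) + 1)) \<le> k})"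
  (is "measure M (\<Union>j. \<Inter>v. ?L j v) = measure M (\<Union>j. \<Inter>v. ?R j v)")
proof (rule measure_UN_eq_if_disjoint)
  have [measurable]: "?L j v \<in> sets M" "?R j v \<in> sets M" for j v
    by measurable
  have partial_sum_mono: "(\<Sum>i<v. g i) \<le> (\<Sum>i<v'. g i)" if "v \<le> v'" for g :: "nat \<Rightarrow> nat" and v v'
    using that by (intro sum_mono2) auto
  show "measure M (\<Inter>v. ?L j v) = measure M (\<Inter>v. ?R j v)" for j
  proof (rule measure_INT_eq_if_decseq)
    show "decseq (?L j)" "decseq (?R j)"
      unfolding decseq_def using partial_sum_mono order_trans by blast+
    show "measure M (?L j v) = measure M (?R j v)" for v
      by (rule measure_left_point_eq_right_point)
  qed auto
  show "disjoint_family (\<lambda>j. \<Inter>v. ?L j v)"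
    unfolding disjoint_family_on_def using one_at_partial_sum_unique[of "\<lambda>i. I _ (- (int i + 1))"] by blast
  show "disjoint_family (\<lambda>j. \<Inter>v. ?R j v)"
    unfolding disjoint_family_on_def using one_at_partial_sum_unique[of "\<lambda>i. I _ (int i + 1)"] by blast
qed auto

lemma measure_S_plus_le_S_minus_ge:
  "measure M {\<omega>\<in>space M. S_plus (I \<omega>) \<le> enat k \<and> enat (Suc l) \<le> S_minus (I \<omega>)} =
   measure M {\<omega>\<in>space M. S_plus (I \<omega>) \<le> enat (k + Suc l) \<and> enat (Suc l) \<le> S_plus (I \<omega>)}"
proof -
  have "measure M {\<omega>\<in>space M. S_plus (I \<omega>) \<le> enat k \<and> enat (Suc l) \<le> S_minus (I \<omega>)} =
      measure M (\<Union>j. \<Inter>v. {\<omega>\<in>space M. I \<omega> (- (int j + 1)) = 1 \<and>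
        (\<Sum>i<j. I \<omega> (- (int i + 1))) = l \<and> (\<Sum>i<v. I \<omega> (int i + 1)) \<le> k})"
  proof (rule measure_eq_AE)
    show "AE \<omega> in M. \<omega> \<in> {\<omega>\<in>space M. S_plus (I \<omega>) \<le> enat k \<and> enat (Suc l) \<le> S_minus (I \<omega>)} \<longleftrightarrow>
        \<omega> \<in> (\<Union>j. \<Inter>v. {\<omega>\<in>space M. I \<omega> (- (int j + 1)) = 1 \<and>
          (\<Sum>i<j. I \<omega> (- (int i + 1))) = l \<and> (\<Sum>i<v. I \<omega> (int i + 1)) \<le> k})"
      using AE_Palm
    proof eventually_elim
      case (elim \<omega>)
      then show ?case
        using enat_Suc_le_suminf_iff[of "\<lambda>i. I \<omega> (- (int i + 1))" l]
        by (auto simp: S_minus_def S_plus_def suminf_enat_le_iff)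
    qed
  qed measurable
  also have "\<dots> = measure M (\<Union>j. \<Inter>v. {\<omega>\<in>space M. I \<omega> (int j + 1) = 1 \<and>
      (\<Sum>i<j. I \<omega> (int i + 1)) = l \<and> (\<Sum>i<v. I \<omega> (int (Suc j + i) + 1)) \<le> k})"
    by (rule measure_UN_left_point_eq_UN_right_point)
  also have "\<dots> = measure M {\<omega>\<in>space M. S_plus (I \<omega>) \<le> enat (k + Suc l) \<and> enat (Suc l) \<le> S_plus (I \<omega>)}"
  proof (rule measure_eq_AE)
    show "AE \<omega> in M. \<omega> \<in> (\<Union>j. \<Inter>v. {\<omega>\<in>space M. I \<omega> (int j + 1) = 1 \<and>
          (\<Sum>i<j. I \<omega> (int i + 1)) = l \<and> (\<Sum>i<v. I \<omega> (int (Suc j + i) + 1)) \<le> k}) \<longleftrightarrow>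
        \<omega> \<in> {\<omega>\<in>space M. S_plus (I \<omega>) \<le> enat (k + Suc l) \<and> enat (Suc l) \<le> S_plus (I \<omega>)}"
      using AE_Palm
    proof eventually_elim
      case (elim \<omega>)
      then show ?case
        using enat_Suc_le_suminf_le_iff[of "\<lambda>i. I \<omega> (int i + 1)" l k]
        by (auto simp: S_plus_def)
    qed
  qed measurable
  finally show ?thesis .
qed

lemma measure_S_plus_eq_S_minus_ge:
  "measure M {\<omega> \<in> space M. S_plus (I \<omega>) = enat k \<and> S_minus (I \<omega>) \<ge> enat l} =
   measure M {\<omega> \<in> space M. S_plus (I \<omega>) = enat (k + l)}"
proof (cases l)
  case 0
  then show ?thesis by (simp flip: zero_enat_def)
next
  case (Suc l')
  show ?thesis
  proof (cases k)
    case 0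
    have "{\<omega> \<in> space M. S_plus (I \<omega>) = enat k \<and> S_minus (I \<omega>) \<ge> enat l} =
        {\<omega> \<in> space M. S_plus (I \<omega>) \<le> enat 0 \<and> enat (Suc l') \<le> S_minus (I \<omega>)}"
      using 0 Suc by (auto simp flip: zero_enat_def)
    moreover have "{\<omega> \<in> space M. S_plus (I \<omega>) = enat (k + l)} =
        {\<omega> \<in> space M. S_plus (I \<omega>) \<le> enat (0 + Suc l') \<and> enat (Suc l') \<le> S_plus (I \<omega>)}"
      using 0 Suc by (auto intro: antisym)
    ultimately show ?thesis
      using measure_S_plus_le_S_minus_ge[of 0 l'] by simp
  next
    case (Suc k')
    have "{\<omega> \<in> space M. S_plus (I \<omega>) = enat (k + l)} =
        {\<omega> \<in> space M. S_plus (I \<omega>) = enat (Suc (k' + Suc l')) \<and> enat (Suc l') \<le> S_plus (I \<omega>)}"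
      using Suc \<open>l = Suc l'\<close> by auto
    then show ?thesis
      using Suc \<open>l = Suc l'\<close> measure_S_plus_le_S_minus_ge[of k' l'] measure_S_plus_le_S_minus_ge[of "Suc k'" l']
        measure_enat_eq_Suc_diff[of "\<lambda>\<omega>. S_plus (I \<omega>)" "\<lambda>\<omega>. enat (Suc l') \<le> S_minus (I \<omega>)" k']
        measure_enat_eq_Suc_diff[of "\<lambda>\<omega>. S_plus (I \<omega>)" "\<lambda>\<omega>. enat (Suc l') \<le> S_plus (I \<omega>)" "k' + Suc l'"]
      by simp
  qed
qed

lemma measure_S_plus_eq_S_minus_eq:
  "measure M {\<omega> \<in> space M. S_plus (I \<omega>) = enat k \<and> S_minus (I \<omega>) = enat l} =
   measure M {\<omega> \<in> space M. S_plus (I \<omega>) = enat (k + l)} -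
   measure M {\<omega> \<in> space M. S_plus (I \<omega>) = enat (k + l + 1)}"
  using measure_enat_eq_diff_Suc[of "\<lambda>\<omega>. S_minus (I \<omega>)" "\<lambda>\<omega>. S_plus (I \<omega>) = enat k" l]
    measure_S_plus_eq_S_minus_ge[of k l] measure_S_plus_eq_S_minus_ge[of k "Suc l"]
  by simp

lemma measure_S_plus_eq_S_minus_infinity:
  "measure M {\<omega> \<in> space M. S_plus (I \<omega>) = enat k \<and> S_minus (I \<omega>) = \<infinity>} = 0"
proof -
  have "(\<lambda>L. measure M {\<omega> \<in> space M. S_plus (I \<omega>) = enat (k + L)}) \<longlonglongrightarrow> 0"
    using LIMSEQ_ignore_initial_segment[OF tendsto_measure_eq_enat_zero[OF measurable_S_plus_I], where k=k]
    by (simp add: add.commute)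
  moreover have "measure M {\<omega> \<in> space M. S_plus (I \<omega>) = enat k \<and> S_minus (I \<omega>) = \<infinity>} \<le>
      measure M {\<omega> \<in> space M. S_plus (I \<omega>) = enat (k + L)}" for L
    unfolding measure_S_plus_eq_S_minus_ge[symmetric] by (intro finite_measure_mono) auto
  ultimately have "measure M {\<omega> \<in> space M. S_plus (I \<omega>) = enat k \<and> S_minus (I \<omega>) = \<infinity>} \<le> 0"
    by (intro LIMSEQ_le_const) auto
  then show ?thesis
    by (simp add: measure_le_0_iff)
qed

lemma measure_S_plus_infinity_S_minus_eq:
  "measure M {\<omega> \<in> space M. S_plus (I \<omega>) = \<infinity> \<and> S_minus (I \<omega>) = enat l} = 0"
proof -
  interpret reflected: Palm_process M "\<lambda>\<omega> t. I \<omega> (- t)"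
    by (rule Palm_process_reflect)
  show ?thesis
    using reflected.measure_S_plus_eq_S_minus_infinity[of l]
    by (simp add: S_plus_reflect S_minus_reflect conj_commute)
qed

lemma measure_S_plus_S_minus_swap:
  "measure M {\<omega> \<in> space M. S_plus (I \<omega>) = a \<and> S_minus (I \<omega>) = b} =
   measure M {\<omega> \<in> space M. S_plus (I \<omega>) = b \<and> S_minus (I \<omega>) = a}"
proof (cases a; cases b)
  fix a' b' assume "a = enat a'" "b = enat b'"
  then show ?thesis
    using measure_S_plus_eq_S_minus_eq[of a' b'] measure_S_plus_eq_S_minus_eq[of b' a'] by (simp add: add.commute)
qed (simp_all add: measure_S_plus_eq_S_minus_infinity measure_S_plus_infinity_S_minus_eq)

lemma distr_S_minus_S_plus_swap:
  "distr M (count_space UNIV) (\<lambda>\<omega>. (S_minus (I \<omega>), S_plus (I \<omega>))) =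
   distr M (count_space UNIV) (\<lambda>\<omega>. (S_plus (I \<omega>), S_minus (I \<omega>)))"
proof (rule distr_count_space_eqI)
  fix p :: "enat \<times> enat"
  obtain a b where "p = (a, b)" by fastforce
  then show "measure M {\<omega> \<in> space M. (S_minus (I \<omega>), S_plus (I \<omega>)) = p} =
      measure M {\<omega> \<in> space M. (S_plus (I \<omega>), S_minus (I \<omega>)) = p}"
    using measure_S_plus_S_minus_swap[of b a] by (simp add: conj_commute)
qed simp_all

lemma distr_S_minus_eq_distr_S_plus:
  "distr M (count_space UNIV) (\<lambda>\<omega>. S_minus (I \<omega>)) = distr M (count_space UNIV) (\<lambda>\<omega>. S_plus (I \<omega>))"
proof -
  have fst: "fst \<in> measurable (count_space UNIV) (count_space (UNIV :: enat set))"
    by simp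
  have "distr M (count_space UNIV) (\<lambda>\<omega>. S_minus (I \<omega>)) =
      distr (distr M (count_space UNIV) (\<lambda>\<omega>. (S_minus (I \<omega>), S_plus (I \<omega>)))) (count_space UNIV) fst"
    by (subst distr_distr[OF fst]) (simp_all add: comp_def)
  also have "\<dots> = distr (distr M (count_space UNIV) (\<lambda>\<omega>. (S_plus (I \<omega>), S_minus (I \<omega>)))) (count_space UNIV) fst"
    by (simp only: distr_S_minus_S_plus_swap)
  also have "\<dots> = distr M (count_space UNIV) (\<lambda>\<omega>. S_plus (I \<omega>))"
    by (subst distr_distr[OF fst]) (simp_all add: comp_def)
  finally show ?thesis .
qed

lemma measure_S_plus_eq_Suc_le:
  "measure M {\<omega> \<in> space M. S_plus (I \<omega>) = enat (k + 1)} \<le> measure M {\<omega> \<in> space M. S_plus (I \<omega>) = enat k}"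
proof -
  have "0 \<le> measure M {\<omega> \<in> space M. S_plus (I \<omega>) = enat k \<and> S_minus (I \<omega>) = enat 0}"
    by simp
  then show ?thesis
    using measure_S_plus_eq_S_minus_eq[of k 0] by simp
qed

end

section \<open>Palm limits of stationary processes\<close>

lemma space_path_space [simp]: "space path_space = UNIV"
  by (simp add: path_space_def space_PiM)

lemma measurable_path_space:
  assumes "\<And>t. (\<lambda>\<omega>. X \<omega> t) \<in> measurable N (count_space UNIV)"
  shows "X \<in> measurable N path_space"
proof -
  have "(\<lambda>\<omega> t. X \<omega> t) \<in> measurable N path_space"
    unfolding path_space_def by (rule measurable_PiM_single') (use assms in auto)
  then show ?thesis by simp
qed

lemma stationary_process_window_shift:
  assumes "stationary_process N J" and "finite W"
  shows "measure N {\<omega>\<in>space N. \<forall>t\<in>W. J \<omega> (t + s) = y t} = measure N {\<omega>\<in>space N. \<forall>t\<in>W. J \<omega> t = y t}"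
proof -
  have J_meas: "\<And>t. (\<lambda>\<omega>. J \<omega> t) \<in> measurable N (count_space UNIV)"
    and shift: "distr N path_space (\<lambda>\<omega> t. J \<omega> (t + s)) = distr N path_space J"
    using assms(1) unfolding stationary_process_def by auto
  have [measurable]: "J \<in> measurable N path_space" "(\<lambda>\<omega> t. J \<omega> (t + s)) \<in> measurable N path_space"
    using J_meas by (auto intro: measurable_path_space)
  define C where "C = {f \<in> space path_space. \<forall>t\<in>W. f t = y t}"
  have "C \<in> sets path_space"
    unfolding C_def path_space_def using \<open>finite W\<close> by measurable
  then have "measure (distr N path_space (\<lambda>\<omega> t. J \<omega> (t + s))) C = measure (distr N path_space J) C"
    by (simp only: shift)
  with \<open>C \<in> sets path_space\<close> show ?thesis
    by (simp add: measure_distr C_def vimage_def Int_def conj_commute)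
qed

lemma ball_atLeastAtMost_int_shift: "(\<forall>t\<in>{a..b::int}. P t) \<longleftrightarrow> (\<forall>t\<in>{a - s..b - s}. P (t + s))"
  by (metis (no_types, lifting) add.commute atLeastAtMost_iff diff_add_cancel diff_le_eq le_diff_eq)

locale Palm_limit = prob_space M for M :: "'a measure" +
  fixes I :: "'a \<Rightarrow> int \<Rightarrow> nat"
    and N :: "nat \<Rightarrow> 'b measure" and J :: "nat \<Rightarrow> 'b \<Rightarrow> int \<Rightarrow> nat"
  assumes I_meas: "\<And>t. (\<lambda>\<omega>. I \<omega> t) \<in> measurable M (count_space UNIV)"
    and N: "\<And>n. prob_space (N n)"
    and J01: "\<And>n \<omega> t. \<omega> \<in> space (N n) \<Longrightarrow> J n \<omega> t \<in> {0, 1}"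
    and J_stat: "\<And>n. stationary_process (N n) (J n)"
    and J_pos: "\<And>n. measure (N n) {\<omega> \<in> space (N n). J n \<omega> 0 = 1} > 0"
    and conv: "\<And>(u::nat) (v::nat) (x::int \<Rightarrow> nat).
      (\<lambda>n. measure (N n) {\<omega> \<in> space (N n). J n \<omega> 0 = 1 \<and> (\<forall>t\<in>{- int u..int v}. J n \<omega> t = x t)}
            / measure (N n) {\<omega> \<in> space (N n). J n \<omega> 0 = 1})
      \<longlonglongrightarrow> measure M {\<omega> \<in> space M. \<forall>t\<in>{- int u..int v}. I \<omega> t = x t}"
begin

lemma tendsto_Palm_window:
  assumes "a \<le> 0" "0 \<le> b"
  shows "(\<lambda>n. measure (N n) {\<omega> \<in> space (N n). J n \<omega> 0 = 1 \<and> (\<forall>t\<in>{a..b}. J n \<omega> t = x t)}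
            / measure (N n) {\<omega> \<in> space (N n). J n \<omega> 0 = 1})
      \<longlonglongrightarrow> measure M {\<omega> \<in> space M. \<forall>t\<in>{a..b}. I \<omega> t = x t}"
  using conv[of "nat (- a)" "nat b" x] assms by simp

lemma point_stationary_I: "point_stationary M I"
  unfolding point_stationary_def
proof (intro allI impI)
  fix a b s :: int and x :: "int \<Rightarrow> nat"
  assume ab: "a \<le> 0" "0 \<le> b" and s: "s \<in> {a..b}" and x: "x 0 = 1" "x s = 1"
  have "measure (N n) {\<omega> \<in> space (N n). J n \<omega> 0 = 1 \<and> (\<forall>t\<in>{a..b}. J n \<omega> t = x t)} =
      measure (N n) {\<omega> \<in> space (N n). J n \<omega> 0 = 1 \<and> (\<forall>t\<in>{a - s..b - s}. J n \<omega> t = x (t + s))}" for n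
  proof -
    have "J n \<omega> 0 = 1 \<and> (\<forall>t\<in>{a..b}. J n \<omega> t = x t) \<longleftrightarrow>
        (\<forall>t\<in>{a - s..b - s}. J n \<omega> (t + s) = x (t + s))" for \<omega>
      using ab x ball_atLeastAtMost_int_shift[of a b "\<lambda>t. J n \<omega> t = x t" s] by auto
    then have "{\<omega> \<in> space (N n). J n \<omega> 0 = 1 \<and> (\<forall>t\<in>{a..b}. J n \<omega> t = x t)} =
        {\<omega> \<in> space (N n). \<forall>t\<in>{a - s..b - s}. J n \<omega> (t + s) = x (t + s)}"
      by simp
    moreover have "{\<omega> \<in> space (N n). J n \<omega> 0 = 1 \<and> (\<forall>t\<in>{a - s..b - s}. J n \<omega> t = x (t + s))} =
        {\<omega> \<in> space (N n). \<forall>t\<in>{a - s..b - s}. J n \<omega> t = x (t + s)}"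
      using s x by auto
    ultimately show ?thesis
      using stationary_process_window_shift[OF J_stat[of n], of "{a - s..b - s}" s "\<lambda>t. x (t + s)"] by simp
  qed
  then have "measure M {\<omega> \<in> space M. \<forall>t\<in>{a..b}. I \<omega> t = x t} =
      measure M {\<omega> \<in> space M. \<forall>t\<in>{a - s..b - s}. I \<omega> t = x (t + s)}"
    using tendsto_Palm_window[OF ab, of x] tendsto_Palm_window[of "a - s" "b - s" "\<lambda>t. x (t + s)"] s
    by (auto intro: LIMSEQ_unique)
  also have "{\<omega> \<in> space M. \<forall>t\<in>{a - s..b - s}. I \<omega> t = x (t + s)} =
      {\<omega> \<in> space M. \<forall>t\<in>{a..b}. I \<omega> (t - s) = x t}"
    using ball_atLeastAtMost_int_shift[where P="\<lambda>t. I _ (t - s) = x t" and s=s] by simp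
  finally show "measure M {\<omega> \<in> space M. \<forall>t\<in>{a..b}. I \<omega> t = x t} =
      measure M {\<omega> \<in> space M. \<forall>t\<in>{a..b}. I \<omega> (t - s) = x t}" .
qed

lemma tendsto_Palm_window_event:
  assumes "a \<le> 0" "0 \<le> b"
    and dep: "\<And>f g. \<forall>t\<in>{a..b}. f t = g t \<Longrightarrow> \<Phi> f = \<Phi> g"
    and \<Phi>: "\<And>f. \<Phi> f \<Longrightarrow> f 0 = 1 \<and> (\<forall>t\<in>{a..b}. f t \<le> 1)"
  shows "(\<lambda>n. measure (N n) {\<omega> \<in> space (N n). \<Phi> (J n \<omega>)} / measure (N n) {\<omega> \<in> space (N n). J n \<omega> 0 = 1})
    \<longlonglongrightarrow> measure M {\<omega> \<in> space M. \<Phi> (I \<omega>)}"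
proof -
  let ?P = "{x \<in> extensional {a..b}. \<Phi> x}"
  have "measure (N n) {\<omega> \<in> space (N n). \<Phi> (J n \<omega>)} =
      (\<Sum>x\<in>?P. measure (N n) {\<omega> \<in> space (N n). J n \<omega> 0 = 1 \<and> (\<forall>t\<in>{a..b}. J n \<omega> t = x t)})" for n
  proof -
    interpret N: prob_space "N n" by (rule N)
    have J_meas: "\<And>t. (\<lambda>\<omega>. J n \<omega> t) \<in> measurable (N n) (count_space UNIV)"
      using J_stat[of n] unfolding stationary_process_def by blast
    have "measure (N n) {\<omega> \<in> space (N n). \<Phi> (J n \<omega>)} =
        (\<Sum>x\<in>?P. measure (N n) {\<omega> \<in> space (N n). \<forall>t\<in>{a..b}. J n \<omega> t = x t})"
      by (rule N.measure_window_event[OF finite_atLeastAtMost J_meas dep]) (auto dest: \<Phi>)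
    also have "\<dots> = (\<Sum>x\<in>?P. measure (N n) {\<omega> \<in> space (N n). J n \<omega> 0 = 1 \<and> (\<forall>t\<in>{a..b}. J n \<omega> t = x t)})"
    proof (rule sum.cong)
      fix x assume "x \<in> ?P"
      then have "x 0 = 1" by (auto dest: \<Phi>)
      with assms(1,2) show "measure (N n) {\<omega> \<in> space (N n). \<forall>t\<in>{a..b}. J n \<omega> t = x t} =
          measure (N n) {\<omega> \<in> space (N n). J n \<omega> 0 = 1 \<and> (\<forall>t\<in>{a..b}. J n \<omega> t = x t)}"
        by (metis (lifting) atLeastAtMost_iff)
    qed simp
    finally show ?thesis .
  qed
  moreover have "measure M {\<omega> \<in> space M. \<Phi> (I \<omega>)} =
      (\<Sum>x\<in>?P. measure M {\<omega> \<in> space M. \<forall>t\<in>{a..b}. I \<omega> t = x t})"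
    by (rule measure_window_event[OF finite_atLeastAtMost I_meas dep]) (auto dest: \<Phi>)
  moreover have "(\<lambda>n. \<Sum>x\<in>?P. measure (N n) {\<omega> \<in> space (N n). J n \<omega> 0 = 1 \<and> (\<forall>t\<in>{a..b}. J n \<omega> t = x t)}
      / measure (N n) {\<omega> \<in> space (N n). J n \<omega> 0 = 1})
    \<longlonglongrightarrow> (\<Sum>x\<in>?P. measure M {\<omega> \<in> space M. \<forall>t\<in>{a..b}. I \<omega> t = x t})"
    by (intro tendsto_sum tendsto_Palm_window assms(1,2))
  ultimately show ?thesis
    by (simp add: sum_divide_distrib)
qed

lemma AE_Palm_limit: "AE \<omega> in M. I \<omega> 0 = 1 \<and> (\<forall>t. I \<omega> t \<le> 1)"
proof -
  have "prob {\<omega> \<in> space M. I \<omega> 0 = 1 \<and> (\<forall>t\<in>{- int m..int m}. I \<omega> t \<le> 1)} = 1" for m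
  proof -
    let ?\<Phi> = "\<lambda>f. f 0 = 1 \<and> (\<forall>t\<in>{- int m..int m}. f t \<le> 1)"
    have "(\<lambda>n. measure (N n) {\<omega> \<in> space (N n). ?\<Phi> (J n \<omega>)} / measure (N n) {\<omega> \<in> space (N n). J n \<omega> 0 = 1})
        \<longlonglongrightarrow> prob {\<omega> \<in> space M. ?\<Phi> (I \<omega>)}"
      by (rule tendsto_Palm_window_event[where a="- int m" and b="int m"]) auto
    moreover have "{\<omega> \<in> space (N n). ?\<Phi> (J n \<omega>)} = {\<omega> \<in> space (N n). J n \<omega> 0 = 1}" for n
    proof -
      have "J n \<omega> t \<le> 1" if "\<omega> \<in> space (N n)" for \<omega> t
        using J01[OF that, of t] by auto
      then show ?thesis by auto
    qed
    moreover have "measure (N n) {\<omega> \<in> space (N n). J n \<omega> 0 = 1} \<noteq> 0" for n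
      using J_pos[of n] by simp
    ultimately show ?thesis
      by (simp add: LIMSEQ_const_iff)
  qed
  then have "AE \<omega> in M. \<omega> \<in> {\<omega> \<in> space M. I \<omega> 0 = 1 \<and> (\<forall>t\<in>{- int m..int m}. I \<omega> t \<le> 1)}" for m
    by (rule AE_prob_1)
  then have "AE \<omega> in M. \<forall>m. \<omega> \<in> {\<omega> \<in> space M. I \<omega> 0 = 1 \<and> (\<forall>t\<in>{- int m..int m}. I \<omega> t \<le> 1)}"
    unfolding AE_all_countable by blast
  then show ?thesis
  proof eventually_elim
    case (elim \<omega>)
    have "I \<omega> t \<le> 1" for t
    proof -
      have "t \<in> {- int (nat \<bar>t\<bar>)..int (nat \<bar>t\<bar>)}" by auto
      then show ?thesis using elim[rule_format, of "nat \<bar>t\<bar>"] by blast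
    qed
    with elim show ?case by blast
  qed
qed

sublocale Palm_process M I
  using I_meas point_stationary_I AE_Palm_limit by unfold_locales

end

theorem theorem3p2:
  fixes M :: "'a measure" and I :: "'a \<Rightarrow> int \<Rightarrow> nat"
    and N :: "nat \<Rightarrow> 'b measure" and J :: "nat \<Rightarrow> 'b \<Rightarrow> int \<Rightarrow> nat"
  assumes M: "prob_space M"
    and I_meas: "\<And>t. (\<lambda>\<omega>. I \<omega> t) \<in> measurable M (count_space UNIV)"
    and N: "\<And>n. prob_space (N n)"
    and J01: "\<And>n \<omega> t. \<omega> \<in> space (N n) \<Longrightarrow> J n \<omega> t \<in> {0, 1}"
    and J_stat: "\<And>n. stationary_process (N n) (J n)"
    and J_pos: "\<And>n. measure (N n) {\<omega> \<in> space (N n). J n \<omega> 0 = 1} > 0"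
    and conv: "\<And>(u::nat) (v::nat) (x::int \<Rightarrow> nat).
      (\<lambda>n. measure (N n) {\<omega> \<in> space (N n). J n \<omega> 0 = 1 \<and> (\<forall>t\<in>{- int u..int v}. J n \<omega> t = x t)}
            / measure (N n) {\<omega> \<in> space (N n). J n \<omega> 0 = 1})
      \<longlonglongrightarrow> measure M {\<omega> \<in> space M. \<forall>t\<in>{- int u..int v}. I \<omega> t = x t}"
  shows "distr M (count_space UNIV) (\<lambda>\<omega>. (S_minus (I \<omega>), S_plus (I \<omega>)))
           = distr M (count_space UNIV) (\<lambda>\<omega>. (S_plus (I \<omega>), S_minus (I \<omega>)))
       \<and> distr M (count_space UNIV) (\<lambda>\<omega>. S_minus (I \<omega>))
           = distr M (count_space UNIV) (\<lambda>\<omega>. S_plus (I \<omega>))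
       \<and> (\<forall>k l :: nat.
           measure M {\<omega> \<in> space M. S_plus (I \<omega>) = enat k \<and> S_minus (I \<omega>) \<ge> enat l}
         = measure M {\<omega> \<in> space M. S_plus (I \<omega>) = enat (k + l)})
       \<and> (\<forall>k l :: nat.
           measure M {\<omega> \<in> space M. S_plus (I \<omega>) = enat k \<and> S_minus (I \<omega>) = enat l}
         = measure M {\<omega> \<in> space M. S_plus (I \<omega>) = enat (k + l)}
           - measure M {\<omega> \<in> space M. S_plus (I \<omega>) = enat (k + l + 1)})
       \<and> (\<forall>k :: nat.
           measure M {\<omega> \<in> space M. S_plus (I \<omega>) = enat k}
         \<ge> measure M {\<omega> \<in> space M. S_plus (I \<omega>) = enat (k + 1)})"
proof -
  interpret Palm_limit M I N J
    using assms by (intro Palm_limit.intro Palm_limit_axioms.intro)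
  show ?thesis
    using distr_S_minus_S_plus_swap distr_S_minus_eq_distr_S_plus measure_S_plus_eq_S_minus_ge
      measure_S_plus_eq_S_minus_eq measure_S_plus_eq_Suc_le
    by blast
qed

end
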